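(* Let $q$ be an odd prime power and let $\mathcal{O}$ be an oval in $PG(2,q)$; let $n=q+1$. Then $\mathcal{O}$ is a $(1,\mu)$-saturating $n$-set with $\mu=\frac{1}{2}(q-1)$. A linear code $C$ over $\mathbb{F}_q$ corresponding to $\mathcal{O}$ is an $[n,n-3,4]_q$ code with covering radius $2$, and it is a $(2,\mu)$-MCF code with $\mu$-density $\gamma_\mu(C,2)=1+\frac{1}{q}$.
   Context: $PG(2,q)$ is the projective plane over $\mathbb{F}_q$. An oval is a set of $q+1$ points of $PG(2,q)$ no three of which are collinear. For a point set $S$, a secant of $S$ is a line $\ell$ with $|\ell\cap S|\ge2$, counted with multiplicity $\binom{|\ell\cap S|}{2}$. A set $S$ of $n$ points of $PG(N,q)$ is a $(1,\mu)$-saturating $n$-set if (M1) $S$ spans $PG(N,q)$, (M2) $S\neq PG(N,q)$, and (M3) every point $Q\notin S$ lies on secants of $S$ whose multiplicities sum to at least $\mu$. A linear code of length $n$ over $\mathbb{F}_q$ corresponds to $S=\{P_1,\dots,P_n\}\subset PG(N,q)$ if it has a parity-check matrix whose $i$-th column is a homogeneous coordinate vector of $P_i$. An $[n,k,d]_q$ code is a linear code of length $n$, dimension $k$ and minimum distance $d$; its covering radius $R$ is $\max_{x\in\mathbb{F}_q^n} d(x,C)$ (Hamming distance). A code $C$ with covering radius $R$ is an $(R,\mu)$-MCF code if every $x\in\mathbb{F}_q^n$ with $d(x,C)=R$ is at distance exactly $R$ from at least $\mu$ codewords. Its $\mu$-density is $\gamma_\mu(C,R)=\frac{\sum_{x:\,d(x,C)=R}\#\{c\in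 C: d(x,c)=R\}}{\mu\cdot\#\{x\in\mathbb{F}_q^n: d(x,C)=R\}}$. *)

theory Defs
  imports "HOL-Analysis.Analysis"
begin

text \<open>Projective geometry PG(N,q): the underlying space is 'a^'m with 'a a finite field
  (q = CARD('a)) and N = CARD('m) - 1. A projective point is the set of nonzero
  scalar multiples of a nonzero vector.\<close>

definition proj_pt :: "'a::field^'m \<Rightarrow> ('a^'m) set" where
  "proj_pt v = {c *s v | c. c \<noteq> 0}"

definition PG :: "('a::field^'m) set set" where
  "PG = {proj_pt v | v. v \<noteq> 0}"

definition proj_line :: "('a::field^'m) set \<Rightarrow> ('a^'m) set \<Rightarrow> ('a^'m) set set" where
  "proj_line P Q = {R \<in> PG. R \<subseteq> vec.span (P \<union> Q)}"

definition proj_lines :: "('a::field^'m) set set set" where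
  "proj_lines = {proj_line P Q | P Q. P \<in> PG \<and> Q \<in> PG \<and> P \<noteq> Q}"

definition oval :: "('a::{finite,field}^3) set set \<Rightarrow> bool" where
  "oval Ov \<longleftrightarrow> Ov \<subseteq> PG \<and> card Ov = CARD('a) + 1 \<and>
     (\<forall>P\<in>Ov. \<forall>Q\<in>Ov. \<forall>R\<in>Ov. P \<noteq> Q \<and> P \<noteq> R \<and> Q \<noteq> R \<longrightarrow>
        \<not> (\<exists>L\<in>proj_lines. P \<in> L \<and> Q \<in> L \<and> R \<in> L))"

definition secant_mult_sum :: "('a::field^'m) set set \<Rightarrow> ('a^'m) set \<Rightarrow> nat" where
  "secant_mult_sum S Q =
     (\<Sum>L\<in>{L\<in>proj_lines. Q \<in> L \<and> card (L \<inter> S) \<ge> 2}. card (L \<inter> S) choose 2)"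

definition saturating_1 :: "('a::field^'m) set set \<Rightarrow> nat \<Rightarrow> nat \<Rightarrow> bool" where
  "saturating_1 S n \<mu> \<longleftrightarrow> S \<subseteq> PG \<and> card S = n \<and>
     vec.span (\<Union>S) = UNIV \<and> S \<noteq> PG \<and>
     (\<forall>Q\<in>PG - S. secant_mult_sum S Q \<ge> \<mu>)"

definition hamming_dist :: "'a^'n \<Rightarrow> 'a^'n \<Rightarrow> nat" where
  "hamming_dist x y = card {i. x $ i \<noteq> y $ i}"

definition code_of_pcm :: "'a::field^'n^'r \<Rightarrow> ('a^'n) set" where
  "code_of_pcm H = {x. H *v x = 0}"

text \<open>H is a parity-check matrix corresponding to the point set S:
  its i-th column is a homogeneous coordinate vector of P_i, where i \<mapsto> P_i enumerates S.\<close>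
definition corresponds :: "'a::field^'n^'m \<Rightarrow> ('a^'m) set set \<Rightarrow> bool" where
  "corresponds H S \<longleftrightarrow> (\<forall>i. column i H \<noteq> 0) \<and>
     bij_betw (\<lambda>i. proj_pt (column i H)) UNIV S"

definition dist_to_code :: "'a^'n \<Rightarrow> ('a^'n) set \<Rightarrow> nat" where
  "dist_to_code x C = Min (hamming_dist x ` C)"

definition min_distance :: "('a^'n) set \<Rightarrow> nat" where
  "min_distance C = Min {hamming_dist x y | x y. x \<in> C \<and> y \<in> C \<and> x \<noteq> y}"

definition covering_radius :: "('a::finite^'n) set \<Rightarrow> nat" where
  "covering_radius C = Max (range (\<lambda>x. dist_to_code x C))"

definition is_MCF :: "('a::finite^'n) set \<Rightarrow> nat \<Rightarrow> nat \<Rightarrow> bool" where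
  "is_MCF C R \<mu> \<longleftrightarrow> covering_radius C = R \<and>
     (\<forall>x. dist_to_code x C = R \<longrightarrow> card {c\<in>C. hamming_dist x c = R} \<ge> \<mu>)"

definition mu_density :: "('a::finite^'n) set \<Rightarrow> nat \<Rightarrow> nat \<Rightarrow> real" where
  "mu_density C R \<mu> =
     real (\<Sum>x\<in>{x. dist_to_code x C = R}. card {c\<in>C. hamming_dist x c = R}) /
     (real \<mu> * real (card {x. dist_to_code x C = R}))"

end

theory Submission
  imports Defs
begin

(* The columns h_i of a parity-check matrix H of the oval code represent the q + 1 points P_i of
   the oval, and any three of them are linearly independent. Hence H has rank 3, nonzero codewords
   have weight at least 4, and the distance from x to the code is read off the syndrome H x: it
   is at most 1 if H x lies on a point P_i, and 2 otherwise, the codewords at distance 2 from x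
   corresponding to the secants through the point H x.
   Each P_i lies on q secants and on exactly one tangent. For a point Q off the oval with t(Q)
   tangents and N(Q) secants through it, t + 2 N = q + 1, so t is even as q is odd. Double counting
   gives sum t = (q + 1)(q^2 - q) and sum t^2 = 2 (q + 1)(q^2 - q), whence t^2 = 2 t, i.e.
   t in {0, 2}, and N >= (q - 1)/2. Summing N over the q^3 - q^2 vectors off the oval yields the
   density (q + 1)/q. *)

lemma sum_card_swap:
  assumes "finite A" "finite B"
  shows "(\<Sum>a\<in>A. card {b\<in>B. R a b}) = (\<Sum>b\<in>B. card {a\<in>A. R a b})"
proof -
  have "(\<Sum>a\<in>A. card {b\<in>B. R a b}) = (\<Sum>a\<in>A. \<Sum>b\<in>B. if R a b then 1 else 0)"
    using assms by (simp add: sum.If_cases Int_def)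
  also have "\<dots> = (\<Sum>b\<in>B. \<Sum>a\<in>A. if R a b then 1 else 0)"
    by (rule sum.swap)
  also have "\<dots> = (\<Sum>b\<in>B. card {a\<in>A. R a b})"
    using assms by (simp add: sum.If_cases Int_def)
  finally show ?thesis .
qed

lemma card_field_ge_2: "CARD('a::{finite,field}) \<ge> 2"
proof -
  have "card {0::'a, 1} \<le> CARD('a)" by (rule card_mono) auto
  then show ?thesis by simp
qed

lemma card_span_independent:
  fixes B :: "('a::{finite,field}^'m) set"
  assumes "vec.independent B"
  shows "card (vec.span B) = CARD('a) ^ card B"
proof -
  define comb where "comb u = (\<Sum>v\<in>B. u v *s v)" for u :: "'a^'m \<Rightarrow> 'a"
  have span_eq: "vec.span B = comb ` (B \<rightarrow>\<^sub>E UNIV)"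
  proof
    show "vec.span B \<subseteq> comb ` (B \<rightarrow>\<^sub>E UNIV)"
    proof
      fix x assume "x \<in> vec.span B"
      then obtain u where "x = comb u" using vec.span_finite[of B] comb_def by auto
      moreover have "comb u = comb (restrict u B)" unfolding comb_def by (rule sum.cong) auto
      ultimately show "x \<in> comb ` (B \<rightarrow>\<^sub>E UNIV)" by auto
    qed
  qed (use vec.span_finite[of B] comb_def in auto)
  have "inj_on comb (B \<rightarrow>\<^sub>E UNIV)"
  proof (rule inj_onI)
    fix u w assume u: "u \<in> B \<rightarrow>\<^sub>E UNIV" and w: "w \<in> B \<rightarrow>\<^sub>E UNIV" and "comb u = comb w"
    then have "(\<Sum>v\<in>B. (u v - w v) *s v) = 0"
      unfolding comb_def by (simp add: vec.scale_left_diff_distrib sum_subtractf)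
    moreover have "\<forall>c. (\<Sum>v\<in>B. c v *s v) = 0 \<longrightarrow> (\<forall>v\<in>B. c v = 0)"
      using assms by (simp add: vec.independent_explicit)
    ultimately have "\<forall>v\<in>B. u v - w v = 0" by (metis (no_types))
    then show "u = w" using u w by (auto intro: PiE_ext)
  qed
  then have "card (vec.span B) = card (B \<rightarrow>\<^sub>E (UNIV :: 'a set))"
    by (simp add: span_eq card_image)
  then show ?thesis by (simp add: card_PiE)
qed

lemma card_subspace:
  fixes S :: "('a::{finite,field}^'m) set"
  assumes "vec.subspace S"
  shows "card S = CARD('a) ^ vec.dim S"
proof -
  obtain B where "B \<subseteq> S" "vec.independent B" "S \<subseteq> vec.span B" "card B = vec.dim S"
    using vec.basis_exists[of S] by blast
  then show ?thesis
    using card_span_independent assms vec.span_subspace by metis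
qed

lemma dim_Int_planes:
  fixes S T :: "('a::field^3) set"
  assumes "vec.subspace S" "vec.subspace T" "vec.dim S = 2" "vec.dim T = 2" "S \<noteq> T"
  shows "vec.dim (S \<inter> T) = 1"
proof -
  have "vec.dim {x + y |x y. x \<in> S \<and> y \<in> T} \<le> vec.dim (UNIV :: ('a^3) set)"
    by (rule vec.dim_subset) simp
  moreover have "vec.dim (UNIV :: ('a^3) set) = 3"
    by (subst vec_dim_card) simp
  ultimately have "vec.dim {x + y |x y. x \<in> S \<and> y \<in> T} \<le> 3"
    by simp
  moreover have "vec.dim {x + y |x y. x \<in> S \<and> y \<in> T} + vec.dim (S \<inter> T) = 4"
    using vec.dim_sums_Int[OF assms(1,2)] assms by simp
  moreover have "vec.dim (S \<inter> T) < 2"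
  proof -
    have "vec.subspace (S \<inter> T)" using assms vec.subspace_inter by blast
    then have "vec.dim (S \<inter> T) \<noteq> 2"
      using vec.subspace_dim_equal[of "S \<inter> T" S] vec.subspace_dim_equal[of "S \<inter> T" T] assms
      by auto
    moreover have "vec.dim (S \<inter> T) \<le> 2" using vec.dim_subset[of "S \<inter> T" S] assms by auto
    ultimately show ?thesis by linarith
  qed
  ultimately show ?thesis by linarith
qed

lemma proj_pt_scale:
  assumes "c \<noteq> 0"
  shows "proj_pt (c *s v) = proj_pt (v::'a::field^'m)"
proof -
  have "(\<exists>d. x = d *s (c *s v) \<and> d \<noteq> 0) \<longleftrightarrow> (\<exists>d. x = d *s v \<and> d \<noteq> 0)" for x
  proof
    assume "\<exists>d. x = d *s (c *s v) \<and> d \<noteq> 0"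
    then show "\<exists>d. x = d *s v \<and> d \<noteq> 0" using assms by (metis vec.scale_scale mult_eq_0_iff)
  next
    assume "\<exists>d. x = d *s v \<and> d \<noteq> 0"
    then obtain d where "x = d *s v" "d \<noteq> 0" by blast
    then have "x = (d / c) *s (c *s v) \<and> d / c \<noteq> 0" using assms by simp
    then show "\<exists>d. x = d *s (c *s v) \<and> d \<noteq> 0" by blast
  qed
  then show ?thesis unfolding proj_pt_def by blast
qed

lemma proj_pt_self: "v \<in> proj_pt v"
  unfolding proj_pt_def by (auto intro: exI[of _ 1])

lemma proj_pt_subset_span: "proj_pt v \<subseteq> vec.span {v}"
  unfolding proj_pt_def by (auto intro: vec.span_scale vec.span_base)

lemma proj_pt_in_PG: "v \<noteq> 0 \<Longrightarrow> proj_pt v \<in> PG"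
  unfolding PG_def by blast

lemma proj_pt_eq_iff_in_span:
  assumes "u \<noteq> 0" "v \<noteq> 0"
  shows "proj_pt u = proj_pt v \<longleftrightarrow> u \<in> vec.span {v}"
proof
  assume "proj_pt u = proj_pt v"
  then show "u \<in> vec.span {v}" using proj_pt_self proj_pt_subset_span by blast
next
  assume "u \<in> vec.span {v}"
  then obtain c where "u = c *s v" unfolding vec.span_singleton by auto
  moreover have "c \<noteq> 0" using \<open>u = c *s v\<close> assms(1) by auto
  ultimately show "proj_pt u = proj_pt v" by (simp add: proj_pt_scale)
qed

lemma proj_pt_subset_iff:
  assumes "vec.subspace W"
  shows "proj_pt v \<subseteq> W \<longleftrightarrow> v \<in> W"
  using proj_pt_self proj_pt_subset_span vec.span_minimal[of "{v}" W] assms by blast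

lemma span_Un_proj_pt: "vec.span (proj_pt u \<union> proj_pt v) = vec.span {u, v}"
proof
  have "proj_pt u \<union> proj_pt v \<subseteq> vec.span {u, v}"
    using proj_pt_subset_span vec.span_mono[of "{_}" "{u, v}"] by blast
  then show "vec.span (proj_pt u \<union> proj_pt v) \<subseteq> vec.span {u, v}"
    by (simp add: vec.span_minimal)
  have "{u, v} \<subseteq> proj_pt u \<union> proj_pt v" using proj_pt_self by blast
  then show "vec.span {u, v} \<subseteq> vec.span (proj_pt u \<union> proj_pt v)"
    by (rule vec.span_mono)
qed

lemma proj_pt_in_proj_line_iff:
  assumes "w \<noteq> 0"
  shows "proj_pt w \<in> proj_line (proj_pt u) (proj_pt v) \<longleftrightarrow> w \<in> vec.span {u, v}"
  unfolding proj_line_def span_Un_proj_pt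
  using assms proj_pt_in_PG proj_pt_subset_iff[OF vec.subspace_span] by blast

lemma ex_corresponds:
  fixes S :: "('a::field^'m) set set"
  assumes "S \<subseteq> PG" "card S = CARD('n::finite)"
  shows "\<exists>H :: 'a^'n^'m. corresponds H S"
proof -
  have "finite S" using assms(2) by (intro card_ge_0_finite) simp
  then obtain g :: "'n \<Rightarrow> ('a^'m) set" where g: "bij_betw g UNIV S"
    using finite_same_card_bij assms(2) by (metis finite_class.finite_UNIV)
  have "\<exists>v. v \<noteq> 0 \<and> g i = proj_pt v" for i
    using g assms(1) unfolding bij_betw_def PG_def by blast
  then obtain rep where rep: "\<And>i. rep i \<noteq> 0 \<and> g i = proj_pt (rep i)" by metis
  define H :: "'a^'n^'m" where "H = (\<chi> r. \<chi> i. rep i $ r)"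
  have "column i H = rep i" for i unfolding H_def column_def by (simp add: vec_eq_iff)
  then have "corresponds H S"
    unfolding corresponds_def using rep bij_betw_cong[of UNIV g] g by metis
  then show ?thesis ..
qed

subsection \<open>Codes given by a parity-check matrix\<close>

definition vec_supp :: "'a::zero^'n \<Rightarrow> 'n set" where
  "vec_supp x = {i. x $ i \<noteq> 0}"

lemma hamming_dist_eq_card_vec_supp:
  "hamming_dist x y = card (vec_supp (x - y :: 'a::ab_group_add^'n))"
  unfolding hamming_dist_def vec_supp_def by simp

lemma vec_supp_diff_subset: "vec_supp (u - v) \<subseteq> vec_supp u \<union> vec_supp (v :: 'a::ab_group_add^'n)"
  unfolding vec_supp_def by auto

lemma mem_code_of_pcm [simp]: "x \<in> code_of_pcm H \<longleftrightarrow> H *v x = 0"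
  unfolding code_of_pcm_def by simp

lemma subspace_code_of_pcm: "vec.subspace (code_of_pcm H)"
  unfolding code_of_pcm_def by (rule vec.subspace_kernel)

lemma matrix_vector_mult_axis: "H *v axis l 1 = column l (H :: 'a::field^'n^'m)"
  by (simp add: vec_eq_iff matrix_vector_mult_def axis_def column_def if_distrib cong: if_cong)

lemma card_syndrome_fiber:
  fixes H :: "'a::{finite,field}^'n^'r"
  assumes "H *v x0 = s"
  shows "card {x. H *v x = s} = card (code_of_pcm H)"
proof -
  have "{x. H *v x = s} = (\<lambda>c. c + x0) ` code_of_pcm H"
  proof
    show "{x. H *v x = s} \<subseteq> (\<lambda>c. c + x0) ` code_of_pcm H"
    proof
      fix x assume "x \<in> {x. H *v x = s}"
      then have "x - x0 \<in> code_of_pcm H" using assms by (simp add: matrix_vector_mult_diff_distrib)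
      then show "x \<in> (\<lambda>c. c + x0) ` code_of_pcm H" by (metis diff_add_cancel imageI)
    qed
  qed (use assms in \<open>auto simp: matrix_vector_right_distrib\<close>)
  moreover have "inj_on (\<lambda>c. c + x0) (code_of_pcm H)" by (auto intro: inj_onI)
  ultimately show ?thesis by (simp add: card_image)
qed

lemma sum_over_syndromes:
  fixes H :: "'a::{finite,field}^'n^'r"
  assumes "surj ((*v) H)"
  shows "(\<Sum>x\<in>{x. H *v x \<in> S}. f (H *v x)) = card (code_of_pcm H) * (\<Sum>s\<in>S. f s)"
proof -
  have "(\<Sum>x\<in>{x. H *v x \<in> S}. f (H *v x)) = (\<Sum>s\<in>S. \<Sum>x\<in>{x\<in>{x. H *v x \<in> S}. H *v x = s}. f (H *v x))"
    by (rule sum.group[symmetric]) auto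
  also have "\<dots> = (\<Sum>s\<in>S. card (code_of_pcm H) * f s)"
  proof (rule sum.cong)
    fix s assume "s \<in> S"
    then have "{x\<in>{x. H *v x \<in> S}. H *v x = s} = {x. H *v x = s}" by auto
    moreover obtain x0 where "H *v x0 = s" using surjD[OF assms] by metis
    ultimately show "(\<Sum>x\<in>{x\<in>{x. H *v x \<in> S}. H *v x = s}. f (H *v x)) = card (code_of_pcm H) * f s"
      by (simp add: card_syndrome_fiber)
  qed simp
  finally show ?thesis by (simp add: sum_distrib_left)
qed

lemma dim_code_of_pcm:
  fixes H :: "'a::{finite,field}^'n^'r"
  assumes "surj ((*v) H)"
  shows "vec.dim (code_of_pcm H) = CARD('n) - CARD('r)"
proof -
  have "card (code_of_pcm H) * CARD('a) ^ CARD('r) = CARD('a) ^ CARD('n)"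
    using sum_over_syndromes[OF assms, where S = UNIV and f = "\<lambda>_. 1"] by simp
  then have "CARD('a) ^ (vec.dim (code_of_pcm H) + CARD('r)) = CARD('a) ^ CARD('n)"
    by (simp add: card_subspace[OF subspace_code_of_pcm] power_add)
  then show ?thesis using card_field_ge_2[where 'a='a] by simp
qed

lemma dist_to_code_le:
  "c \<in> C \<Longrightarrow> dist_to_code x C \<le> hamming_dist x (c :: 'a::finite^'n)"
  unfolding dist_to_code_def by (rule Min_le) auto

lemma le_dist_to_code:
  "C \<noteq> {} \<Longrightarrow> (\<And>c. c \<in> C \<Longrightarrow> m \<le> hamming_dist x c) \<Longrightarrow> m \<le> dist_to_code x (C :: ('a::finite^'n) set)"
  unfolding dist_to_code_def by (subst Min_ge_iff) auto

lemma dist_to_code_of_pcm_le: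
  fixes H :: "'a::{finite,field}^'n^'r"
  assumes "H *v e = H *v x"
  shows "dist_to_code x (code_of_pcm H) \<le> card (vec_supp e)"
  using dist_to_code_le[of "x - e" "code_of_pcm H" x] assms
  by (simp add: matrix_vector_mult_diff_distrib hamming_dist_eq_card_vec_supp)

lemma in_span_columns_if_vec_supp_subset:
  assumes "vec_supp x \<subseteq> A"
  shows "H *v x \<in> vec.span ((\<lambda>i. column i H) ` A)"
  unfolding matrix_mult_sum
proof (rule vec.span_sum)
  fix i
  show "x $ i *s column i H \<in> vec.span ((\<lambda>i. column i H) ` A)"
  proof (cases "i \<in> A")
    case True then show ?thesis by (simp add: vec.span_base vec.span_scale)
  next
    case False then have "x $ i = 0" using assms unfolding vec_supp_def by auto
    then show ?thesis by (simp add: vec.span_zero)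
  qed
qed

lemma ex_vec_supp_subset_if_in_span_columns:
  fixes H :: "'a::field^'n::finite^'r"
  assumes "inj_on (\<lambda>i. column i H) A" "s \<in> vec.span ((\<lambda>i. column i H) ` A)"
  shows "\<exists>x. vec_supp x \<subseteq> A \<and> H *v x = s"
proof -
  obtain u where u: "s = (\<Sum>v\<in>(\<lambda>i. column i H) ` A. u v *s v)"
    using assms(2) vec.span_finite[of "(\<lambda>i. column i H) ` A"] by auto
  define x where "x = (\<chi> i. if i \<in> A then u (column i H) else 0)"
  have "H *v x = (\<Sum>i\<in>A. u (column i H) *s column i H)"
    unfolding matrix_mult_sum by (rule sum.mono_neutral_cong_right) (auto simp: x_def)
  also have "\<dots> = s" unfolding u by (simp add: sum.reindex[OF assms(1)])
  finally show ?thesis by (intro exI[of _ x]) (auto simp: vec_supp_def x_def)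
qed

lemma eq_0_if_independent_columns:
  fixes H :: "'a::field^'n::finite^'r"
  assumes "inj_on (\<lambda>i. column i H) A" "vec.independent ((\<lambda>i. column i H) ` A)"
    and "vec_supp x \<subseteq> A" "H *v x = 0"
  shows "x = 0"
proof -
  have outside: "x $ i = 0" if "i \<notin> A" for i
    using assms(3) that unfolding vec_supp_def by blast
  define c where "c v = x $ (inv_into A (\<lambda>i. column i H) v)" for v
  have "H *v x = (\<Sum>i\<in>A. x $ i *s column i H)"
    unfolding matrix_mult_sum by (rule sum.mono_neutral_right) (simp_all add: outside)
  also have "\<dots> = (\<Sum>v\<in>(\<lambda>i. column i H) ` A. c v *s v)"
    by (simp add: sum.reindex[OF assms(1)] c_def inv_into_f_f[OF assms(1)])
  finally have "(\<Sum>v\<in>(\<lambda>i. column i H) ` A. c v *s v) = 0" using assms(4) by simp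
  then have "\<forall>v\<in>(\<lambda>i. column i H) ` A. c v = 0"
    using assms(2) by (simp add: vec.independent_explicit)
  then have "x $ i = 0" for i
    using outside by (cases "i \<in> A") (auto simp: c_def inv_into_f_f[OF assms(1)])
  then show ?thesis by (simp add: vec_eq_iff)
qed

subsection \<open>The oval code\<close>

text \<open>Points and lines of \<open>PG(2,q)\<close> are handled through the 1- and 2-dimensional subspaces of
  \<open>'a^3\<close> they span.\<close>

locale oval_code =
  fixes Ov :: "('a::{finite,field}^3) set set" and H :: "'a^'n::finite^3"
  assumes odd_card: "odd CARD('a)"
    and oval: "oval Ov"
    and card_index: "CARD('n) = CARD('a) + 1"
    and corresponds: "corresponds H Ov"
begin

abbreviation h :: "'n \<Rightarrow> 'a^3" where
  "h i \<equiv> column i H"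

abbreviation pt :: "'n \<Rightarrow> ('a^3) set" where
  "pt i \<equiv> proj_pt (h i)"

definition point :: "'n \<Rightarrow> ('a^3) set" where
  "point i = vec.span {h i}"

definition secant :: "'n \<Rightarrow> 'n \<Rightarrow> ('a^3) set" where
  "secant i j = vec.span {h i, h j}"

lemma card_field_ge_3: "CARD('a) \<ge> 3"
  using card_field_ge_2[where 'a='a] odd_card by presburger

lemma column_nonzero [simp]: "h i \<noteq> 0"
  using corresponds unfolding corresponds_def by blast

lemma bij_pt: "bij_betw pt UNIV Ov"
  using corresponds unfolding corresponds_def by blast

lemma pt_in_Ov: "pt i \<in> Ov"
  using bij_pt bij_betwE by blast

lemma pt_eq_iff: "pt i = pt j \<longleftrightarrow> i = j"
  using bij_pt unfolding bij_betw_def by (auto dest: injD)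

lemma Ov_subset_PG: "Ov \<subseteq> PG"
  using oval unfolding oval_def by blast

lemma card_Ov: "card Ov = CARD('a) + 1"
  using oval unfolding oval_def by blast

lemma inj_column: "inj h"
  by (rule injI) (metis pt_eq_iff)

lemma column_eq_iff [simp]: "h i = h j \<longleftrightarrow> i = j"
  using inj_column by (auto dest: injD)

lemma column_notin_point: "i \<noteq> j \<Longrightarrow> h j \<notin> point i"
  unfolding point_def using proj_pt_eq_iff_in_span column_nonzero pt_eq_iff by metis

lemma column_notin_secant:
  assumes "i \<noteq> j" "k \<noteq> i" "k \<noteq> j"
  shows "h k \<notin> secant i j"
proof
  assume "h k \<in> secant i j"
  then have "pt k \<in> proj_line (pt i) (pt j)"
    unfolding secant_def by (simp add: proj_pt_in_proj_line_iff)
  moreover have "pt i \<in> proj_line (pt i) (pt j)" "pt j \<in> proj_line (pt i) (pt j)"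
    by (simp_all add: proj_pt_in_proj_line_iff vec.span_base)
  moreover have distinct: "pt i \<noteq> pt j" "pt i \<noteq> pt k" "pt j \<noteq> pt k"
    using assms pt_eq_iff by auto
  moreover have "proj_line (pt i) (pt j) \<in> proj_lines"
    unfolding proj_lines_def using distinct pt_in_Ov Ov_subset_PG by blast
  moreover have "\<not> (\<exists>L\<in>proj_lines. pt i \<in> L \<and> pt j \<in> L \<and> pt k \<in> L)"
    using oval distinct pt_in_Ov unfolding oval_def by blast
  ultimately show False by blast
qed

lemma pt_in_proj_line_iff:
  assumes "i \<noteq> j"
  shows "pt m \<in> proj_line (pt i) (pt j) \<longleftrightarrow> m = i \<or> m = j"
proof -
  have "pt m \<in> proj_line (pt i) (pt j) \<longleftrightarrow> h m \<in> secant i j"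
    unfolding secant_def by (simp add: proj_pt_in_proj_line_iff)
  also have "\<dots> \<longleftrightarrow> m = i \<or> m = j"
    using column_notin_secant[OF assms, of m] by (auto simp: secant_def vec.span_base)
  finally show ?thesis .
qed

lemma independent_two_columns:
  assumes "i \<noteq> j"
  shows "vec.independent {h i, h j}"
  using column_notin_point[OF assms[symmetric]] assms
  by (simp add: point_def vec.independent_insert)

lemma independent_three_columns:
  assumes "i \<noteq> j" "k \<noteq> i" "k \<noteq> j"
  shows "vec.independent {h k, h i, h j}"
  using column_notin_secant[OF assms] independent_two_columns[OF assms(1)]
  by (simp add: secant_def vec.independent_insert)

lemma independent_columns:
  assumes "card A \<le> 3"
  shows "vec.independent (h ` A)"
proof -
  have "card (- A) = CARD('n) - card A"
    by (simp add: Compl_eq_Diff_UNIV card_Diff_subset)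
  then have "3 - card A \<le> card (- A)"
    using assms card_index card_field_ge_3 by linarith
  then obtain B where B: "B \<subseteq> - A" "card B = 3 - card A" "finite B"
    by (rule obtain_subset_with_card_n)
  have "card (A \<union> B) = card A + card B"
    using B by (intro card_Un_disjoint) auto
  then have "card (A \<union> B) = 3"
    using assms B(2) by linarith
  then obtain i j k where "A \<union> B = {k, i, j}" "i \<noteq> j" "k \<noteq> i" "k \<noteq> j"
    unfolding card_3_iff by blast
  then have "vec.independent (h ` (A \<union> B))"
    using independent_three_columns by simp
  then show ?thesis
    by (rule vec.independent_mono) blast
qed

lemma span_three_columns:
  assumes "i \<noteq> j" "k \<noteq> i" "k \<noteq> j"
  shows "vec.span {h k, h i, h j} = UNIV"
proof -
  have "card {h k, h i, h j} = 3"
    using assms by simp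
  moreover have "vec.dim (UNIV :: ('a^3) set) = 3"
    by (subst vec_dim_card) simp
  ultimately show ?thesis
    using vec.card_eq_dim[of "{h k, h i, h j}" UNIV] independent_three_columns[OF assms] by auto
qed

lemma ex_three_indices: "\<exists>i j k :: 'n. i \<noteq> j \<and> k \<noteq> i \<and> k \<noteq> j"
proof -
  have "3 \<le> CARD('n)" using card_index card_field_ge_3 by simp
  then obtain B :: "'n set" where "card B = 3" by (meson obtain_subset_with_card_n)
  then show ?thesis using card_3_iff by metis
qed

subsection \<open>Secants and tangents\<close>

lemma subspace_point [simp]: "vec.subspace (point i)"
  unfolding point_def by simp

lemma subspace_secant [simp]: "vec.subspace (secant i j)"
  unfolding secant_def by simp

lemma column_in_point [simp]: "h i \<in> point i"
  unfolding point_def by (simp add: vec.span_base)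

lemma zero_in_point [simp]: "0 \<in> point i"
  unfolding point_def by (simp add: vec.span_zero)

lemma column_in_secant [simp]: "h i \<in> secant i j" "h j \<in> secant i j"
  unfolding secant_def by (simp_all add: vec.span_base)

lemma secant_commute: "secant i j = secant j i"
  unfolding secant_def by (simp add: insert_commute)

lemma dim_point: "vec.dim (point i) = 1"
  unfolding point_def using vec.dim_span_eq_card_independent[of "{h i}"]
  by (simp add: vec.independent_insert)

lemma dim_secant: "i \<noteq> j \<Longrightarrow> vec.dim (secant i j) = 2"
  unfolding secant_def using vec.dim_span_eq_card_independent[OF independent_two_columns] by simp

lemma card_point: "card (point i) = CARD('a)"
  using card_subspace[OF subspace_point] dim_point by simp

lemma point_subset: "h i \<in> W \<Longrightarrow> vec.subspace W \<Longrightarrow> point i \<subseteq> W"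
  unfolding point_def by (simp add: vec.span_minimal)

lemma column_in_subspace_if_point_meets:
  assumes "v \<in> point k" "v \<noteq> 0" "v \<in> W" "vec.subspace W"
  shows "h k \<in> W"
proof -
  obtain c where c: "v = c *s h k" using assms(1) unfolding point_def vec.span_singleton by auto
  then have "h k = inverse c *s v" using assms(2) by simp
  then show ?thesis using assms(3,4) vec.subspace_scale by metis
qed

lemma point_Int_point: "i \<noteq> j \<Longrightarrow> point i \<inter> point j = {0}"
  using column_in_subspace_if_point_meets[of _ i "point j"] column_notin_point[of j i]
  by (auto simp: point_def vec.span_zero)

lemma Int_planes_through_column:
  assumes "vec.subspace A" "vec.subspace B" "vec.dim A = 2" "vec.dim B = 2" "A \<noteq> B"
    and "h i \<in> A" "h i \<in> B"
  shows "A \<inter> B = point i"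
proof -
  have "point i \<subseteq> A \<inter> B" using point_subset assms by blast
  moreover have "vec.dim (A \<inter> B) = 1" using dim_Int_planes assms by blast
  ultimately show ?thesis
    using vec.subspace_dim_equal[OF subspace_point] vec.subspace_inter assms(1,2) dim_point
    by (metis order_refl)
qed

lemma card_plane_minus_point:
  assumes "vec.subspace W" "vec.dim W = 2" "h i \<in> W"
  shows "card (W - point i) = CARD('a)^2 - CARD('a)"
  using card_subspace[OF assms(1)] assms card_point point_subset
  by (simp add: card_Diff_subset)

text \<open>The \<open>q\<close> secant planes through \<open>h i\<close> cover only \<open>q + q (q\<^sup>2 - q) < q\<^sup>3\<close> vectors,
  so some plane through \<open>h i\<close> contains no other column: the tangent at \<open>P\<^sub>i\<close>.\<close>

lemma ex_tangent: "\<exists>T. vec.subspace T \<and> vec.dim T = 2 \<and> h i \<in> T \<and> (\<forall>j. j \<noteq> i \<longrightarrow> h j \<notin> T)"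
proof -
  let ?q = "CARD('a)"
  let ?U = "point i \<union> (\<Union>j\<in>-{i}. secant i j - point i)"
  have "card (\<Union>j\<in>-{i}. secant i j - point i) \<le> (\<Sum>j\<in>-{i}. card (secant i j - point i))"
    by (rule card_UN_le) simp
  also have "\<dots> = ?q * (?q^2 - ?q)"
    using card_plane_minus_point[OF subspace_secant dim_secant] card_index
    by (simp add: Compl_eq_Diff_UNIV card_Diff_subset)
  also have "\<dots> = ?q^3 - ?q^2"
    by (simp add: diff_mult_distrib2 power2_eq_square power3_eq_cube)
  finally have "card ?U \<le> ?q + (?q^3 - ?q^2)"
    using card_Un_le[of "point i" "\<Union>j\<in>-{i}. secant i j - point i"] card_point[of i]
    by linarith
  moreover have "?q^1 < ?q^2" "?q^2 < ?q^3"
    using card_field_ge_3 by (simp_all only: power_strict_increasing_iff)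
  ultimately have "card ?U < card (UNIV :: ('a^3) set)" by simp
  then have "?U \<noteq> UNIV" by auto
  then obtain w where w: "w \<notin> ?U" by blast
  let ?T = "vec.span {h i, w}"
  have "w \<noteq> h i" using w by auto
  then have "vec.independent {h i, w}"
    using w by (auto simp: point_def vec.independent_insert insert_commute)
  then have "vec.dim ?T = 2"
    using vec.dim_span_eq_card_independent \<open>w \<noteq> h i\<close> by fastforce
  moreover have "h j \<notin> ?T" if "j \<noteq> i" for j
  proof
    assume "h j \<in> ?T"
    then have "secant i j \<subseteq> ?T"
      unfolding secant_def by (simp add: vec.span_minimal vec.span_base)
    then have "secant i j = ?T"
      using vec.subspace_dim_equal[OF subspace_secant] dim_secant that \<open>vec.dim ?T = 2\<close> by simp
    then show False using w that by (auto simp: vec.span_base)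
  qed
  ultimately show ?thesis by (intro exI[of _ ?T]) (auto simp: vec.span_base)
qed

definition tangent :: "'n \<Rightarrow> ('a^3) set" where
  "tangent i = (SOME T. vec.subspace T \<and> vec.dim T = 2 \<and> h i \<in> T \<and> (\<forall>j. j \<noteq> i \<longrightarrow> h j \<notin> T))"

lemma subspace_tangent [simp]: "vec.subspace (tangent i)"
  and dim_tangent: "vec.dim (tangent i) = 2"
  and column_in_tangent: "h i \<in> tangent i"
  and column_notin_tangent: "j \<noteq> i \<Longrightarrow> h j \<notin> tangent i"
  using someI_ex[OF ex_tangent[of i]] unfolding tangent_def by blast+

definition pencil :: "'n \<Rightarrow> 'n \<Rightarrow> ('a^3) set" where
  "pencil i j = (if j = i then tangent i else secant i j)"

lemma subspace_pencil [simp]: "vec.subspace (pencil i j)"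
  unfolding pencil_def by simp

lemma dim_pencil: "vec.dim (pencil i j) = 2"
  unfolding pencil_def using dim_tangent dim_secant by simp

lemma column_in_pencil_iff: "h k \<in> pencil i j \<longleftrightarrow> k = i \<or> (j \<noteq> i \<and> k = j)"
  unfolding pencil_def using column_in_tangent column_notin_tangent column_notin_secant
  by (cases "j = i"; cases "k = i"; cases "k = j") auto

lemma pencil_Int: "j \<noteq> k \<Longrightarrow> pencil i j \<inter> pencil i k = point i"
  using Int_planes_through_column[OF subspace_pencil subspace_pencil dim_pencil dim_pencil]
    column_in_pencil_iff by metis

lemma pencil_covers:
  assumes "s \<notin> point i"
  shows "\<exists>j. s \<in> pencil i j"
proof -
  let ?q = "CARD('a)"
  have "card (\<Union>j. pencil i j - point i) = (\<Sum>j\<in>UNIV. card (pencil i j - point i))"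
    by (rule card_UN_disjoint) (use pencil_Int in auto)
  also have "\<dots> = (?q + 1) * (?q^2 - ?q)"
    using card_plane_minus_point[OF subspace_pencil dim_pencil] column_in_pencil_iff card_index
    by simp
  also have "\<dots> = ?q^3 - ?q"
    by (simp add: diff_mult_distrib2 power2_eq_square power3_eq_cube algebra_simps)
  also have "\<dots> = card (- point i)"
    using card_point[of i] by (simp add: Compl_eq_Diff_UNIV card_Diff_subset)
  finally have "(\<Union>j. pencil i j - point i) = - point i"
    by (intro card_subset_eq) auto
  then show ?thesis using assms by auto
qed

subsection \<open>Points off the oval\<close>

definition off_oval :: "('a^3) set" where
  "off_oval = {s. \<forall>k. s \<notin> point k}"

definition tangents_through :: "'a^3 \<Rightarrow> 'n set" where
  "tangents_through s = {i. s \<in> tangent i}"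

definition secants_through :: "'a^3 \<Rightarrow> 'n set set" where
  "secants_through s = {{i, j} | i j. i \<noteq> j \<and> s \<in> secant i j}"

lemma card_off_oval: "card off_oval = CARD('a)^3 - CARD('a)^2"
proof -
  let ?q = "CARD('a)"
  define A where "A = (\<Union>k. point k - {0})"
  have "card A = (\<Sum>k\<in>UNIV. card (point k - {0}))"
    unfolding A_def by (rule card_UN_disjoint) (use point_Int_point in auto)
  also have "\<dots> = (?q + 1) * (?q - 1)"
    using card_point card_index by (simp add: card_Diff_subset)
  finally have card_A: "card A = (?q + 1) * (?q - 1)" .
  have "- off_oval = insert 0 A"
    unfolding off_oval_def A_def by auto
  moreover have "0 \<notin> A" unfolding A_def by blast
  ultimately have "card (- off_oval) = 1 + (?q + 1) * (?q - 1)"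
    using card_A by simp
  also have "\<dots> = ?q^2"
    using card_field_ge_3 by (simp add: power2_eq_square algebra_simps)
  finally show ?thesis
    using card_Diff_subset[of "- off_oval" UNIV] by simp
qed

lemma off_oval_nonempty: "off_oval \<noteq> {}"
proof -
  have "CARD('a)^2 < CARD('a)^3"
    using card_field_ge_3 by (simp only: power_strict_increasing_iff)
  then show ?thesis using card_off_oval by auto
qed

lemma pencil_unique:
  assumes "s \<in> off_oval" "s \<in> pencil i j" "s \<in> pencil i k"
  shows "j = k"
proof (rule ccontr)
  assume "j \<noteq> k"
  then have "s \<in> point i" using pencil_Int assms(2,3) by blast
  then show False using assms(1) unfolding off_oval_def by blast
qed

lemma mem_Union_secants_through:
  "i \<in> \<Union>(secants_through s) \<longleftrightarrow> (\<exists>j. j \<noteq> i \<and> s \<in> secant i j)"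
proof
  assume "i \<in> \<Union>(secants_through s)"
  then obtain a b where "i = a \<or> i = b" "a \<noteq> b" "s \<in> secant a b"
    unfolding secants_through_def by blast
  then show "\<exists>j. j \<noteq> i \<and> s \<in> secant i j"
    using secant_commute[of a b] by auto
next
  assume "\<exists>j. j \<noteq> i \<and> s \<in> secant i j"
  then obtain j where "j \<noteq> i" "s \<in> secant i j" by blast
  then have "{i, j} \<in> secants_through s"
    unfolding secants_through_def by blast
  then show "i \<in> \<Union>(secants_through s)" by blast
qed

lemma Compl_tangents_through:
  assumes "s \<in> off_oval"
  shows "- tangents_through s = \<Union>(secants_through s)"
proof -
  have "i \<notin> tangents_through s \<longleftrightarrow> (\<exists>j. j \<noteq> i \<and> s \<in> secant i j)" for i
  proof -
    obtain j where j: "s \<in> pencil i j"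
      using pencil_covers assms unfolding off_oval_def by blast
    have "s \<in> tangent i \<longleftrightarrow> s \<in> pencil i i"
      by (simp add: pencil_def)
    also have "\<dots> \<longleftrightarrow> j = i"
      using pencil_unique[OF assms j] j by blast
    finally have "s \<in> tangent i \<longleftrightarrow> j = i" .
    moreover have "(\<exists>k. k \<noteq> i \<and> s \<in> secant i k) \<longleftrightarrow> (\<exists>k. k \<noteq> i \<and> s \<in> pencil i k)"
      by (auto simp: pencil_def)
    moreover have "\<dots> \<longleftrightarrow> j \<noteq> i"
      using pencil_unique[OF assms j] j by blast
    ultimately show ?thesis
      unfolding tangents_through_def by blast
  qed
  then show ?thesis
    unfolding set_eq_iff Compl_iff mem_Union_secants_through by blast
qed

lemma secants_through_elem:
  assumes "p \<in> secants_through s" "i \<in> p"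
  obtains j where "j \<noteq> i" "s \<in> secant i j" "p = {i, j}"
proof -
  obtain a b where ab: "p = {a, b}" "a \<noteq> b" "s \<in> secant a b"
    using assms(1) unfolding secants_through_def by blast
  show ?thesis
  proof (cases "i = a")
    case True
    then show ?thesis using that[of b] ab by blast
  next
    case False
    then have "i = b" "p = {b, a}" using ab assms(2) by auto
    then show ?thesis using that[of a] ab secant_commute[of a b] by blast
  qed
qed

lemma card_Union_secants_through:
  assumes "s \<in> off_oval"
  shows "card (\<Union>(secants_through s)) = 2 * card (secants_through s)"
proof -
  have "disjoint (secants_through s)"
  proof (rule pairwiseI)
    fix p p' assume p: "p \<in> secants_through s" and p': "p' \<in> secants_through s" and "p \<noteq> p'"
    show "disjnt p p'"
    proof (rule ccontr)
      assume "\<not> disjnt p p'"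
      then obtain i where i: "i \<in> p" "i \<in> p'" unfolding disjnt_def by blast
      obtain j where "j \<noteq> i" "s \<in> secant i j" "p = {i, j}"
        by (rule secants_through_elem[OF p i(1)])
      moreover obtain k where "k \<noteq> i" "s \<in> secant i k" "p' = {i, k}"
        by (rule secants_through_elem[OF p' i(2)])
      ultimately show False
        using pencil_unique[OF assms, of i j k] \<open>p \<noteq> p'\<close> by (simp add: pencil_def)
    qed
  qed
  moreover have "card p = 2" if "p \<in> secants_through s" for p
    using that unfolding secants_through_def by auto
  ultimately show ?thesis
    by (simp add: card_Union_disjoint)
qed

lemma card_tangents_secants_through:
  assumes "s \<in> off_oval"
  shows "card (tangents_through s) + 2 * card (secants_through s) = CARD('a) + 1"
proof -
  have "card (tangents_through s) + card (- tangents_through s) = CARD('n)"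
    by (simp add: Compl_eq_Diff_UNIV card_Diff_subset card_mono)
  then show ?thesis
    using Compl_tangents_through card_Union_secants_through assms card_index by simp
qed

lemma point_meets_tangent:
  assumes "s \<in> tangent i" "s \<in> point k" "s \<noteq> 0"
  shows "k = i"
proof (rule ccontr)
  assume "k \<noteq> i"
  then show False
    using column_in_subspace_if_point_meets[OF assms(2,3,1) subspace_tangent] column_notin_tangent
    by blast
qed

lemma card_off_oval_on_tangent: "card {s\<in>off_oval. s \<in> tangent i} = CARD('a)^2 - CARD('a)"
proof -
  have "{s\<in>off_oval. s \<in> tangent i} = tangent i - point i"
    unfolding off_oval_def by (auto dest: point_meets_tangent)
  then show ?thesis
    using card_plane_minus_point dim_tangent column_in_tangent by simp
qed

lemma card_off_oval_on_two_tangents: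
  assumes "i \<noteq> j"
  shows "card {s\<in>off_oval. s \<in> tangent i \<and> s \<in> tangent j} = CARD('a) - 1"
proof -
  have "{s\<in>off_oval. s \<in> tangent i \<and> s \<in> tangent j} = tangent i \<inter> tangent j - {0}"
    unfolding off_oval_def using assms by (auto dest: point_meets_tangent)
  moreover have "tangent i \<noteq> tangent j"
    using column_in_tangent[of i] column_notin_tangent[OF assms] by blast
  then have "vec.dim (tangent i \<inter> tangent j) = 1"
    by (rule dim_Int_planes[OF subspace_tangent subspace_tangent dim_tangent dim_tangent])
  then have "card (tangent i \<inter> tangent j) = CARD('a)"
    using card_subspace[OF vec.subspace_inter[OF subspace_tangent subspace_tangent]] by simp
  moreover have "0 \<in> tangent i \<inter> tangent j"
    by (simp add: vec.subspace_0)
  ultimately show ?thesis by (simp add: card_Diff_subset)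
qed

lemma sum_card_tangents_through:
  "(\<Sum>s\<in>off_oval. card (tangents_through s)) = (CARD('a) + 1) * (CARD('a)^2 - CARD('a))"
proof -
  have "(\<Sum>s\<in>off_oval. card (tangents_through s)) = (\<Sum>i\<in>UNIV. card {s\<in>off_oval. s \<in> tangent i})"
    unfolding tangents_through_def using sum_card_swap[of off_oval UNIV "\<lambda>s i. s \<in> tangent i"]
    by simp
  then show ?thesis
    using card_off_oval_on_tangent card_index by simp
qed

lemma sum_card_tangents_through_squared:
  "(\<Sum>s\<in>off_oval. card (tangents_through s)^2) = 2 * ((CARD('a) + 1) * (CARD('a)^2 - CARD('a)))"
proof -
  let ?q = "CARD('a)"
  let ?R = "\<lambda>s (p :: 'n \<times> 'n). s \<in> tangent (fst p) \<and> s \<in> tangent (snd p)"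
  have "card (tangents_through s)^2 = card {p\<in>UNIV. ?R s p}" for s
  proof -
    have "{p\<in>UNIV. ?R s p} = tangents_through s \<times> tangents_through s"
      unfolding tangents_through_def by auto
    then show ?thesis by (simp add: card_cartesian_product power2_eq_square)
  qed
  then have "(\<Sum>s\<in>off_oval. card (tangents_through s)^2) = (\<Sum>p\<in>UNIV. card {s\<in>off_oval. ?R s p})"
    using sum_card_swap[of off_oval UNIV ?R] by simp
  also have "\<dots> = (\<Sum>i\<in>UNIV. \<Sum>j\<in>UNIV. card {s\<in>off_oval. s \<in> tangent i \<and> s \<in> tangent j})"
    by (simp add: UNIV_Times_UNIV[symmetric] sum.cartesian_product case_prod_beta del: UNIV_Times_UNIV)
  also have "\<dots> = (\<Sum>i\<in>(UNIV :: 'n set). 2 * (?q^2 - ?q))"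
  proof (rule sum.cong)
    fix i :: 'n
    have "(\<Sum>j\<in>UNIV. card {s\<in>off_oval. s \<in> tangent i \<and> s \<in> tangent j})
        = card {s\<in>off_oval. s \<in> tangent i \<and> s \<in> tangent i}
          + (\<Sum>j\<in>UNIV - {i}. card {s\<in>off_oval. s \<in> tangent i \<and> s \<in> tangent j})"
      by (rule sum.remove) auto
    also have "\<dots> = (?q^2 - ?q) + (\<Sum>j\<in>UNIV - {i}. ?q - 1)"
      using card_off_oval_on_tangent card_off_oval_on_two_tangents by simp
    also have "\<dots> = (?q^2 - ?q) + ?q * (?q - 1)"
      using card_index by (simp add: card_Diff_subset)
    also have "\<dots> = 2 * (?q^2 - ?q)"
      by (simp add: power2_eq_square diff_mult_distrib2)
    finally show "(\<Sum>j\<in>UNIV. card {s\<in>off_oval. s \<in> tangent i \<and> s \<in> tangent j}) = 2 * (?q^2 - ?q)" .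
  qed simp
  finally show ?thesis using card_index by simp
qed

lemma card_tangents_through_le_2:
  assumes "s \<in> off_oval"
  shows "card (tangents_through s) \<le> 2"
proof -
  let ?t = "\<lambda>s. card (tangents_through s)"
  have le: "2 * ?t s \<le> ?t s ^ 2" if "s \<in> off_oval" for s
  proof -
    have "even (?t s)"
      using card_tangents_secants_through[OF that] odd_card by presburger
    then have "?t s \<noteq> 1" by auto
    then show ?thesis by (cases "?t s") (auto simp: power2_eq_square)
  qed
  have "(\<Sum>s\<in>off_oval. ?t s ^ 2 - 2 * ?t s) = (\<Sum>s\<in>off_oval. ?t s ^ 2) - (\<Sum>s\<in>off_oval. 2 * ?t s)"
    using le by (intro sum_subtractf_nat) blast
  also have "\<dots> = 0"
    using sum_card_tangents_through sum_card_tangents_through_squared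
    by (simp add: sum_distrib_left[symmetric])
  finally have "?t s ^ 2 \<le> 2 * ?t s" using assms by simp
  then show ?thesis by (cases "?t s \<le> 2") (auto simp: power2_eq_square)
qed

lemma card_secants_through_ge:
  assumes "s \<in> off_oval"
  shows "(CARD('a) - 1) div 2 \<le> card (secants_through s)"
  using card_tangents_secants_through[OF assms] card_tangents_through_le_2[OF assms] by linarith

lemma secants_through_nonempty: "s \<in> off_oval \<Longrightarrow> secants_through s \<noteq> {}"
  using card_secants_through_ge card_field_ge_3 by fastforce

lemma sum_card_secants_through:
  "real (\<Sum>s\<in>off_oval. card (secants_through s))
     = (real CARD('a) + 1) * real CARD('a) * (real CARD('a) - 1)^2 / 2"
proof -
  let ?q = "CARD('a)" and ?Q = "real CARD('a)"
  have "?q^1 \<le> ?q^2" "?q^2 \<le> ?q^3"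
    using card_field_ge_3 by (intro power_increasing; simp)+
  then have tangents: "real (\<Sum>s\<in>off_oval. card (tangents_through s)) = (?Q + 1) * (?Q^2 - ?Q)"
    and off_oval: "real (card off_oval) = ?Q^3 - ?Q^2"
    unfolding sum_card_tangents_through card_off_oval of_nat_mult by simp_all
  have "2 * real (\<Sum>s\<in>off_oval. card (secants_through s))
      = (\<Sum>s\<in>off_oval. (?Q + 1) - real (card (tangents_through s)))"
    unfolding of_nat_sum sum_distrib_left
  proof (rule sum.cong)
    fix s assume "s \<in> off_oval"
    then have "real (card (tangents_through s) + 2 * card (secants_through s)) = ?Q + 1"
      by (simp only: card_tangents_secants_through)
    then show "2 * real (card (secants_through s)) = ?Q + 1 - real (card (tangents_through s))"
      by simp
  qed simp
  also have "\<dots> = (?Q + 1) * (?Q^3 - ?Q^2) - (?Q + 1) * (?Q^2 - ?Q)"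
    by (simp add: sum_subtractf tangents[symmetric] off_oval[symmetric])
  finally show ?thesis
    by (simp add: field_simps power2_eq_square power3_eq_cube)
qed

abbreviation C :: "('a^'n) set" where
  "C \<equiv> code_of_pcm H"

lemma syndrome_in_span_columns_iff:
  "s \<in> vec.span (h ` A) \<longleftrightarrow> (\<exists>e. vec_supp e \<subseteq> A \<and> H *v e = s)"
proof
  show "s \<in> vec.span (h ` A) \<Longrightarrow> \<exists>e. vec_supp e \<subseteq> A \<and> H *v e = s"
    by (rule ex_vec_supp_subset_if_in_span_columns[OF inj_on_subset[OF inj_column]]) auto
  show "\<exists>e. vec_supp e \<subseteq> A \<and> H *v e = s \<Longrightarrow> s \<in> vec.span (h ` A)"
    using in_span_columns_if_vec_supp_subset by blast
qed

lemma surj_syndrome: "surj ((*v) H)"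
proof -
  obtain i j k :: 'n where "i \<noteq> j" "k \<noteq> i" "k \<noteq> j" using ex_three_indices by blast
  then have "vec.span (h ` {k, i, j}) = UNIV" using span_three_columns by simp
  then have "\<exists>e. H *v e = s" for s
    using syndrome_in_span_columns_iff[of s "{k, i, j}"] by auto
  then show ?thesis unfolding surj_def by metis
qed

lemma dim_C: "vec.dim C = CARD('n) - 3"
  using dim_code_of_pcm[OF surj_syndrome] by simp

lemma eq_if_syndrome_eq:
  assumes "card A \<le> 3" "vec_supp u \<subseteq> A" "vec_supp v \<subseteq> A" "H *v u = H *v v"
  shows "u = v"
proof -
  have "vec_supp (u - v) \<subseteq> A" using vec_supp_diff_subset assms(2,3) by blast
  moreover have "H *v (u - v) = 0" using assms(4) by (simp add: matrix_vector_mult_diff_distrib)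
  ultimately have "u - v = 0"
    using eq_0_if_independent_columns[OF inj_on_subset[OF inj_column] independent_columns[OF assms(1)]]
    by blast
  then show ?thesis by simp
qed

lemma weight_ge_4:
  assumes "x \<in> C" "x \<noteq> 0"
  shows "4 \<le> card (vec_supp x)"
proof (rule ccontr)
  assume "\<not> 4 \<le> card (vec_supp x)"
  then have "x = 0"
    using eq_if_syndrome_eq[of "vec_supp x" x 0] assms(1) by (simp add: vec_supp_def)
  then show False using assms(2) by simp
qed

lemma ex_weight_4: "\<exists>y\<in>C. y \<noteq> 0 \<and> card (vec_supp y) \<le> 4"
proof -
  obtain i j k :: 'n where ijk: "i \<noteq> j" "k \<noteq> i" "k \<noteq> j" using ex_three_indices by blast
  have "card {k, i, j} < CARD('n)" using ijk card_index card_field_ge_3 by simp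
  then have "{k, i, j} \<noteq> UNIV" by auto
  then obtain l where l: "l \<notin> {k, i, j}" by blast
  obtain x where x: "vec_supp x \<subseteq> {k, i, j}" "H *v x = h l"
    using syndrome_in_span_columns_iff[of "h l" "{k, i, j}"] span_three_columns[OF ijk] by auto
  define y where "y = x - axis l 1"
  have "x $ l = 0" using x(1) l unfolding vec_supp_def by blast
  then have "y $ l \<noteq> 0" by (simp add: y_def axis_def)
  then have "y \<noteq> 0" by auto
  have C: "y \<in> C"
    using x(2) by (simp add: y_def matrix_vector_mult_diff_distrib matrix_vector_mult_axis)
  moreover have "vec_supp y \<subseteq> {l, k, i, j}"
    using x(1) by (auto simp: y_def vec_supp_def axis_def)
  moreover have "card {l, k, i, j} = 4" using ijk l by simp
  ultimately have "card (vec_supp y) \<le> 4"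
    using card_mono[of "{l, k, i, j}" "vec_supp y"] by simp
  then show ?thesis using C \<open>y \<noteq> 0\<close> by blast
qed

lemma syndrome_in_point_if_weight_le_1:
  assumes "card (vec_supp e) \<le> 1"
  obtains m where "H *v e \<in> point m"
proof -
  obtain m where "vec_supp e \<subseteq> {m}"
  proof (cases "vec_supp e = {}")
    case False
    then have "card (vec_supp e) = 1" using assms by (simp add: le_Suc_eq)
    then show ?thesis using that by (metis card_1_singletonE order_refl)
  qed (use that in blast)
  then show ?thesis
    using that in_span_columns_if_vec_supp_subset[of e "{m}" H] unfolding point_def by simp
qed

lemma min_distance_C: "min_distance C = 4"
proof -
  let ?D = "{hamming_dist x y | x y. x \<in> C \<and> y \<in> C \<and> x \<noteq> y}"
  have "finite ?D"
    by (rule finite_subset[of _ "range (case_prod hamming_dist)"]) auto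
  moreover have "4 \<le> d" if d: "d \<in> ?D" for d
  proof -
    obtain x y where "d = hamming_dist x y" "x \<in> C" "y \<in> C" "x \<noteq> y" using d by blast
    moreover have "x - y \<in> C" using \<open>x \<in> C\<close> \<open>y \<in> C\<close>
      by (simp add: matrix_vector_mult_diff_distrib)
    ultimately show ?thesis using weight_ge_4 by (simp add: hamming_dist_eq_card_vec_supp)
  qed
  moreover have "4 \<in> ?D"
  proof -
    obtain y where "y \<in> C" "y \<noteq> 0" "card (vec_supp y) \<le> 4" using ex_weight_4 by blast
    moreover have "hamming_dist y 0 = card (vec_supp y)"
      by (simp add: hamming_dist_eq_card_vec_supp)
    ultimately have "4 = hamming_dist y 0" using weight_ge_4 by fastforce
    moreover have "(0 :: 'a^'n) \<in> C" by simp
    ultimately show ?thesis using \<open>y \<in> C\<close> \<open>y \<noteq> 0\<close> by blast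
  qed
  ultimately show ?thesis
    unfolding min_distance_def by (intro Min_eqI) auto
qed

lemma dist_to_code_le_1_if_on_oval:
  assumes "H *v x \<in> point k"
  shows "dist_to_code x C \<le> 1"
proof -
  have "H *v x \<in> vec.span (h ` {k})" using assms by (simp add: point_def)
  then obtain e where e: "vec_supp e \<subseteq> {k}" "H *v e = H *v x"
    unfolding syndrome_in_span_columns_iff by blast
  have "card (vec_supp e) \<le> card {k}" using e(1) by (rule card_mono[rotated]) simp
  then show ?thesis using dist_to_code_of_pcm_le[OF e(2)] by simp
qed

lemma weight_ge_2_if_off_oval:
  assumes "H *v e \<in> off_oval"
  shows "2 \<le> card (vec_supp e)"
proof (rule ccontr)
  assume "\<not> 2 \<le> card (vec_supp e)"
  then have "card (vec_supp e) \<le> 1" by simp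
  then obtain m where "H *v e \<in> point m"
    by (rule syndrome_in_point_if_weight_le_1)
  then show False using assms unfolding off_oval_def by blast
qed

lemma dist_to_code_off_oval:
  assumes "H *v x \<in> off_oval"
  shows "dist_to_code x C = 2"
proof (rule antisym)
  obtain p where "p \<in> secants_through (H *v x)"
    using secants_through_nonempty[OF assms] by blast
  then obtain i j where "i \<noteq> j" "H *v x \<in> secant i j"
    unfolding secants_through_def by blast
  then have "H *v x \<in> vec.span (h ` {i, j})" by (simp add: secant_def)
  then obtain e where e: "vec_supp e \<subseteq> {i, j}" "H *v e = H *v x"
    unfolding syndrome_in_span_columns_iff by blast
  have "card (vec_supp e) \<le> card {i, j}" using e(1) by (rule card_mono[rotated]) simp
  then have "card (vec_supp e) \<le> 2" by (simp add: card_insert_if split: if_splits)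
  then show "dist_to_code x C \<le> 2"
    using dist_to_code_of_pcm_le[OF e(2)] by simp
  have "0 \<in> C" by simp
  then have "C \<noteq> {}" by blast
  then show "2 \<le> dist_to_code x C"
  proof (rule le_dist_to_code)
    fix c assume "c \<in> C"
    then have "H *v (x - c) \<in> off_oval"
      using assms by (simp add: matrix_vector_mult_diff_distrib)
    then show "2 \<le> hamming_dist x c"
      using weight_ge_2_if_off_oval by (simp add: hamming_dist_eq_card_vec_supp)
  qed
qed

lemma dist_to_code_le_2: "dist_to_code x C \<le> 2"
proof (cases "H *v x \<in> off_oval")
  case False
  then obtain k where "H *v x \<in> point k" unfolding off_oval_def by blast
  then show ?thesis using dist_to_code_le_1_if_on_oval by fastforce
qed (simp add: dist_to_code_off_oval)

lemma dist_to_code_eq_2_iff: "dist_to_code x C = 2 \<longleftrightarrow> H *v x \<in> off_oval"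
proof
  assume dist: "dist_to_code x C = 2"
  show "H *v x \<in> off_oval"
  proof (rule ccontr)
    assume "H *v x \<notin> off_oval"
    then obtain k where "H *v x \<in> point k" unfolding off_oval_def by blast
    then show False using dist_to_code_le_1_if_on_oval dist by fastforce
  qed
qed (rule dist_to_code_off_oval)

lemma covering_radius_C: "covering_radius C = 2"
proof -
  obtain s where "s \<in> off_oval" using off_oval_nonempty by blast
  moreover obtain x where "H *v x = s" using surj_syndrome by (metis surjD)
  ultimately have "dist_to_code x C = 2" using dist_to_code_off_oval by simp
  then show ?thesis
    unfolding covering_radius_def using dist_to_code_le_2 by (intro Max_eqI) auto
qed

lemma vec_supp_in_secants_through:
  assumes "c \<in> C" "hamming_dist x c = 2"
  shows "vec_supp (x - c) \<in> secants_through (H *v x)"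
proof -
  have "card (vec_supp (x - c)) = 2"
    using assms(2) by (simp add: hamming_dist_eq_card_vec_supp)
  then obtain i j where ij: "vec_supp (x - c) = {i, j}" "i \<noteq> j"
    by (meson card_2_iff)
  have "H *v (x - c) \<in> vec.span (h ` {i, j})"
    by (rule in_span_columns_if_vec_supp_subset) (simp add: ij(1))
  then have "H *v x \<in> secant i j"
    using assms(1) by (simp add: secant_def matrix_vector_mult_diff_distrib)
  then show ?thesis
    using ij unfolding secants_through_def by blast
qed

lemma ex_codeword_at_distance_2:
  assumes "H *v x \<in> off_oval" "p \<in> secants_through (H *v x)"
  obtains c where "c \<in> C" "hamming_dist x c = 2" "vec_supp (x - c) = p"
proof -
  obtain i j where ij: "p = {i, j}" "i \<noteq> j" "H *v x \<in> secant i j"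
    using assms(2) unfolding secants_through_def by blast
  then have "H *v x \<in> vec.span (h ` {i, j})" by (simp add: secant_def)
  then obtain e where e: "vec_supp e \<subseteq> p" "H *v e = H *v x"
    unfolding syndrome_in_span_columns_iff ij(1) by blast
  have "card p = 2" using ij by simp
  moreover have "2 \<le> card (vec_supp e)"
    using weight_ge_2_if_off_oval e(2) assms(1) by simp
  ultimately have "vec_supp e = p"
    using card_seteq[OF _ e(1)] by simp
  then show ?thesis
    using that[of "x - e"] e(2) \<open>card p = 2\<close>
    by (simp add: matrix_vector_mult_diff_distrib hamming_dist_eq_card_vec_supp)
qed

lemma card_codewords_at_distance_2:
  assumes "H *v x \<in> off_oval"
  shows "card {c\<in>C. hamming_dist x c = 2} = card (secants_through (H *v x))"
proof -
  let ?S = "{c\<in>C. hamming_dist x c = 2}"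
  have inj: "inj_on (\<lambda>c. vec_supp (x - c)) ?S"
  proof (rule inj_onI)
    fix c c' assume c: "c \<in> ?S" and c': "c' \<in> ?S" and supp: "vec_supp (x - c) = vec_supp (x - c')"
    have "card (vec_supp (x - c)) \<le> 3"
      using c by (simp add: hamming_dist_eq_card_vec_supp)
    moreover have "H *v (x - c) = H *v (x - c')"
      using c c' by (simp add: matrix_vector_mult_diff_distrib)
    ultimately have "x - c = x - c'"
      using eq_if_syndrome_eq[of "vec_supp (x - c)" "x - c" "x - c'"] supp by simp
    then show "c = c'" by simp
  qed
  have "(\<lambda>c. vec_supp (x - c)) ` ?S = secants_through (H *v x)"
  proof
    show "(\<lambda>c. vec_supp (x - c)) ` ?S \<subseteq> secants_through (H *v x)"
    proof (rule image_subsetI)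
      fix c assume "c \<in> ?S"
      then show "vec_supp (x - c) \<in> secants_through (H *v x)"
        using vec_supp_in_secants_through[of c x] by simp
    qed
    show "secants_through (H *v x) \<subseteq> (\<lambda>c. vec_supp (x - c)) ` ?S"
    proof
      fix p assume "p \<in> secants_through (H *v x)"
      then obtain c where "c \<in> C" "hamming_dist x c = 2" "vec_supp (x - c) = p"
        by (rule ex_codeword_at_distance_2[OF assms])
      then show "p \<in> (\<lambda>c. vec_supp (x - c)) ` ?S" by (intro image_eqI[of _ _ c]) simp_all
    qed
  qed
  then show ?thesis using card_image[OF inj] by simp
qed

lemma is_MCF_C: "is_MCF C 2 ((CARD('a) - 1) div 2)"
  unfolding is_MCF_def
  using covering_radius_C dist_to_code_eq_2_iff card_codewords_at_distance_2
    card_secants_through_ge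
  by simp

lemma mu_density_C: "mu_density C 2 ((CARD('a) - 1) div 2) = 1 + 1 / real CARD('a)"
proof -
  let ?Q = "real CARD('a)" and ?\<mu> = "(CARD('a) - 1) div 2"
  have dist_2: "{x. dist_to_code x C = 2} = {x. H *v x \<in> off_oval}"
    using dist_to_code_eq_2_iff by blast
  have "(\<Sum>x\<in>{x. H *v x \<in> off_oval}. card {c\<in>C. hamming_dist x c = 2})
      = (\<Sum>x\<in>{x. H *v x \<in> off_oval}. card (secants_through (H *v x)))"
    by (rule sum.cong[OF refl], rule card_codewords_at_distance_2) simp
  also have "\<dots> = card C * (\<Sum>s\<in>off_oval. card (secants_through s))"
    by (rule sum_over_syndromes[OF surj_syndrome])
  finally have num: "real (\<Sum>x\<in>{x. H *v x \<in> off_oval}. card {c\<in>C. hamming_dist x c = 2})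
      = real (card C) * ((?Q + 1) * ?Q * (?Q - 1)^2 / 2)"
    using sum_card_secants_through by simp
  have "card {x. H *v x \<in> off_oval} = card C * card off_oval"
    using sum_over_syndromes[OF surj_syndrome, where S = off_oval and f = "\<lambda>_. 1"] by simp
  moreover have "real (card off_oval) = ?Q^2 * (?Q - 1)"
    using card_off_oval card_field_ge_3
    by (simp add: power_increasing algebra_simps power2_eq_square power3_eq_cube)
  ultimately have den: "real (card {x. H *v x \<in> off_oval}) = real (card C) * (?Q^2 * (?Q - 1))"
    by simp
  have "2 * ?\<mu> = CARD('a) - 1" using odd_card by presburger
  then have \<mu>: "real ?\<mu> = (?Q - 1) / 2" using card_field_ge_3 by simp
  have "0 \<in> C" by simp
  then have "C \<noteq> {}" by blast
  then have "card C \<noteq> 0" by (simp add: card_eq_0_iff)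
  define K where "K = real (card C) * (?Q - 1)^2 * ?Q / 2"
  have "K \<noteq> 0" "?Q \<noteq> 0"
    using \<open>card C \<noteq> 0\<close> card_field_ge_3 by (auto simp: K_def)
  have "real (card C) * ((?Q + 1) * ?Q * (?Q - 1)^2 / 2) = K * (?Q + 1)"
    and "(?Q - 1) / 2 * (real (card C) * (?Q^2 * (?Q - 1))) = K * ?Q"
    by (simp_all add: K_def power2_eq_square mult_ac)
  then show ?thesis
    unfolding mu_density_def dist_2 num den \<mu>
    using \<open>K \<noteq> 0\<close> \<open>?Q \<noteq> 0\<close> by (simp add: field_simps)
qed

lemma secant_line_through:
  assumes "i \<noteq> j" "s \<in> secant i j" "s \<noteq> 0"
  shows "proj_line (pt i) (pt j) \<in> {L\<in>proj_lines. proj_pt s \<in> L \<and> 2 \<le> card (L \<inter> Ov)}"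
proof -
  have "proj_pt s \<in> proj_line (pt i) (pt j)"
    using assms(2,3) by (simp add: proj_pt_in_proj_line_iff secant_def)
  moreover have "pt i \<noteq> pt j" using assms(1) pt_eq_iff by simp
  then have "proj_line (pt i) (pt j) \<in> proj_lines"
    unfolding proj_lines_def using pt_in_Ov Ov_subset_PG by blast
  moreover have "{pt i, pt j} \<subseteq> proj_line (pt i) (pt j) \<inter> Ov"
    using pt_in_proj_line_iff[OF assms(1)] pt_in_Ov by auto
  then have "card {pt i, pt j} \<le> card (proj_line (pt i) (pt j) \<inter> Ov)"
    by (rule card_mono[rotated]) simp
  then have "2 \<le> card (proj_line (pt i) (pt j) \<inter> Ov)"
    using \<open>pt i \<noteq> pt j\<close> by simp
  ultimately show ?thesis by blast
qed

lemma card_secants_through_le_secant_mult_sum: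
  assumes "s \<in> off_oval"
  shows "card (secants_through s) \<le> secant_mult_sum Ov (proj_pt s)"
proof -
  let ?I = "{L\<in>proj_lines. proj_pt s \<in> L \<and> 2 \<le> card (L \<inter> Ov)}"
  define line where "line p = {R\<in>PG. R \<subseteq> vec.span (h ` p)}" for p
  have line_pair: "line {i, j} = proj_line (pt i) (pt j)" for i j
    unfolding line_def proj_line_def span_Un_proj_pt by simp
  have "s \<noteq> 0" using assms zero_in_point unfolding off_oval_def by blast
  have line: "line p \<in> ?I" "{m. pt m \<in> line p} = p" if p: "p \<in> secants_through s" for p
  proof -
    obtain i j where "p = {i, j}" "i \<noteq> j" "s \<in> secant i j"
      using p unfolding secants_through_def by blast
    then show "line p \<in> ?I" "{m. pt m \<in> line p} = p"
      using secant_line_through[OF _ _ \<open>s \<noteq> 0\<close>] pt_in_proj_line_iff line_pair by auto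
  qed
  have "inj_on line (secants_through s)"
    by (rule inj_onI) (metis line(2))
  then have "card (secants_through s) \<le> card ?I"
    by (rule card_inj_on_le) (use line(1) in auto)
  also have "\<dots> \<le> (\<Sum>L\<in>?I. card (L \<inter> Ov) choose 2)"
    using sum_mono[of ?I "\<lambda>_. 1::nat" "\<lambda>L. card (L \<inter> Ov) choose 2"]
    by (simp add: Suc_le_eq)
  finally show ?thesis unfolding secant_mult_sum_def .
qed

lemma saturating_Ov: "saturating_1 Ov (CARD('a) + 1) ((CARD('a) - 1) div 2)"
proof -
  have "vec.span (\<Union>Ov) = UNIV"
  proof -
    obtain i j k :: 'n where "i \<noteq> j" "k \<noteq> i" "k \<noteq> j" using ex_three_indices by blast
    moreover have "{h k, h i, h j} \<subseteq> \<Union>Ov" using pt_in_Ov proj_pt_self by blast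
    then have "vec.span {h k, h i, h j} \<subseteq> vec.span (\<Union>Ov)" by (rule vec.span_mono)
    ultimately show ?thesis using span_three_columns by auto
  qed
  moreover have "Ov \<noteq> PG"
  proof -
    obtain s where s: "s \<in> off_oval" using off_oval_nonempty by blast
    then have "s \<noteq> 0" unfolding off_oval_def using zero_in_point by blast
    moreover have "proj_pt s \<noteq> pt k" for k
      using s proj_pt_eq_iff_in_span[OF \<open>s \<noteq> 0\<close> column_nonzero, of k]
      unfolding off_oval_def point_def by blast
    then have "proj_pt s \<notin> Ov" using bij_betw_imp_surj_on[OF bij_pt] by auto
    ultimately show ?thesis using proj_pt_in_PG by blast
  qed
  moreover have "(CARD('a) - 1) div 2 \<le> secant_mult_sum Ov Q" if Q: "Q \<in> PG - Ov" for Q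
  proof -
    obtain s where s: "s \<noteq> 0" "Q = proj_pt s" using Q unfolding PG_def by blast
    have "s \<in> off_oval"
      unfolding off_oval_def
    proof (intro CollectI allI notI)
      fix k assume "s \<in> point k"
      then have "Q = pt k"
        using s proj_pt_eq_iff_in_span[OF s(1) column_nonzero, of k] unfolding point_def by simp
      then show False using Q pt_in_Ov by blast
    qed
    then show ?thesis
      using le_trans[OF card_secants_through_ge card_secants_through_le_secant_mult_sum] s(2)
      by simp
  qed
  ultimately show ?thesis
    unfolding saturating_1_def using Ov_subset_PG card_Ov by blast
qed

end

theorem proposition5p7:
  fixes Ov :: "('a::{finite,field}^3) set set"
  assumes "odd CARD('a)"
    and "oval Ov"
    and "CARD('n::finite) = CARD('a) + 1"
  shows "saturating_1 Ov (CARD('a) + 1) ((CARD('a) - 1) div 2) \<and>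
    (\<forall>H :: 'a^'n^3. corresponds H Ov \<longrightarrow>
       (let C = code_of_pcm H; \<mu> = (CARD('a) - 1) div 2 in
         vec.dim C = CARD('n) - 3 \<and> min_distance C = 4 \<and>
         covering_radius C = 2 \<and> is_MCF C 2 \<mu> \<and>
         mu_density C 2 \<mu> = 1 + 1 / real CARD('a)))"
proof -
  have code: "oval_code Ov H" if "corresponds H Ov" for H :: "'a^'n^3"
    using assms that by unfold_locales
  have "Ov \<subseteq> PG" "card Ov = CARD('n)" using assms(2,3) unfolding oval_def by auto
  then obtain H0 :: "'a^'n^3" where "corresponds H0 Ov" using ex_corresponds by blast
  then have "saturating_1 Ov (CARD('a) + 1) ((CARD('a) - 1) div 2)"
    by (rule oval_code.saturating_Ov[OF code])
  moreover
  {
    fix H :: "'a^'n^3"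
    assume "corresponds H Ov"
    then interpret oval_code Ov H by (rule code)
    note dim_C min_distance_C covering_radius_C is_MCF_C mu_density_C
  }
  ultimately show ?thesis by (simp add: Let_def)
qed

end
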